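(* Let $n\geq 3$ and consider the $n$-cycle scenario. For every nondisturbing strongly contextual behavior $\{p_1,\dots,p_n\}$ there exist $k\in\{1,\dots,n\}$ and $(a_1,\dots,a_n)\in\{0,1\}^n$ (with $a_{n+1}:=a_1$) such that $\bar p_k(a_k,\lnot a_{k+1})=\bar p_k(\lnot a_k,a_{k+1})=1$ and $\bar p_k(a_k,a_{k+1})=\bar p_k(\lnot a_k,\lnot a_{k+1})=0$, and for every $i\neq k$, $\bar p_i(a_i,a_{i+1})=\bar p_i(\lnot a_i,\lnot a_{i+1})=1$ and $\bar p_i(a_i,\lnot a_{i+1})=\bar p_i(\lnot a_i,a_{i+1})=0$, where $\lnot x=1-x$.
   Context: The $n$-cycle scenario has measurements $M_1,\dots,M_n$ with outcomes in $\{0,1\}$ and contexts $\{M_i,M_{i+1}\}$, indices mod $n$. A behavior is a family of probability distributions $p_i$ on $\{0,1\}^2$, $p_i(x,y)$ the probability that $M_i=x$, $M_{i+1}=y$; it is nondisturbing if $\sum_y p_i(y,x)=\sum_y p_{i+1}(x,y)$ for all $i,x$. Set $\bar p_i(x,y)=1$ if $p_i(x,y)>0$ and $0$ otherwise. The behavior is strongly contextual if there is no $t\in\{0,1\}^n$ with $p_i(t_i,t_{i+1})>0$ for all $i$. *)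

theory Defs
  imports Complex_Main
begin

text \<open>n-cycle scenario: measurements M_0,...,M_{n-1} (0-based), outcomes in bool
  (False = 0, True = 1), contexts {M_i, M_{(i+1) mod n}}.
  A behavior is p :: nat => bool => bool => real, where p i x y is the probability
  that M_i = x and M_{(i+1) mod n} = y, for i < n.\<close>

definition is_behavior :: "nat \<Rightarrow> (nat \<Rightarrow> bool \<Rightarrow> bool \<Rightarrow> real) \<Rightarrow> bool" where
  "is_behavior n p \<longleftrightarrow>
     (\<forall>i<n. (\<forall>x y. p i x y \<ge> 0) \<and> (\<Sum>x\<in>UNIV. \<Sum>y\<in>UNIV. p i x y) = 1)"

definition nondisturbing :: "nat \<Rightarrow> (nat \<Rightarrow> bool \<Rightarrow> bool \<Rightarrow> real) \<Rightarrow> bool" where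
  "nondisturbing n p \<longleftrightarrow>
     (\<forall>i<n. \<forall>x. (\<Sum>y\<in>UNIV. p i y x) = (\<Sum>y\<in>UNIV. p ((i + 1) mod n) x y))"

definition pbar :: "(nat \<Rightarrow> bool \<Rightarrow> bool \<Rightarrow> real) \<Rightarrow> nat \<Rightarrow> bool \<Rightarrow> bool \<Rightarrow> nat" where
  "pbar p i x y = (if p i x y > 0 then 1 else 0)"

definition strongly_contextual :: "nat \<Rightarrow> (nat \<Rightarrow> bool \<Rightarrow> bool \<Rightarrow> real) \<Rightarrow> bool" where
  "strongly_contextual n p \<longleftrightarrow>
     \<not> (\<exists>t :: nat \<Rightarrow> bool. \<forall>i<n. p i (t i) (t ((i + 1) mod n)) > 0)"

end

theory Submission
  imports Defs
begin

text \<open>Nondisturbance makes the column support of \<open>p\<^sub>i\<close> equal to the row support of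
  \<open>p\<^sub>i\<^sub>+\<^sub>1\<close>, so a support point can always be continued greedily around the cycle.
  If some \<open>p\<^sub>i\<close> had an empty row, or a column with two support points, all support of the
  preceding context would lead to a single value, and a greedy walk started there would close up
  into a global section. Hence each \<open>p\<^sub>i\<close> is supported on the graph of a bijection of
  \<open>{0,1}\<close>: perfect correlation or perfect anticorrelation. Propagating the correlations
  from \<open>a\<^sub>1 = 0\<close> satisfies every context except possibly the last, and strong contextuality
  forces the last one to be violated.\<close>

lemma sum_pos_iff_ex_pos:
  fixes f :: "'a::finite \<Rightarrow> 'b::ordered_comm_monoid_add"
  assumes "\<And>x. 0 \<le> f x"
  shows "0 < (\<Sum>x\<in>UNIV. f x) \<longleftrightarrow> (\<exists>x. 0 < f x)"
  using sum_nonneg_eq_0_iff[of UNIV f] sum_nonneg[of UNIV f] assms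
  by (auto simp: order_less_le)

lemma not_strongly_contextual_if_closed_walk:
  assumes "j < n"
    and walk: "\<And>m. m < n \<Longrightarrow> 0 < p ((j + m) mod n) (t m) (t (Suc m))"
    and closed: "t n = t 0"
  shows "\<not> strongly_contextual n p"
proof -
  define T where "T i = t ((i + (n - j)) mod n)" for i
  have "0 < p i (T i) (T ((i + 1) mod n))" if "i < n" for i
  proof -
    define m where "m = (i + (n - j)) mod n"
    have "m < n" "(j + m) mod n = i"
      using \<open>j < n\<close> \<open>i < n\<close> by (simp_all add: m_def mod_add_right_eq)
    moreover have "T ((i + 1) mod n) = t (Suc m)"
    proof -
      have "T ((i + 1) mod n) = t (Suc m mod n)"
        by (simp add: T_def m_def mod_add_left_eq mod_Suc_eq)
      also have "\<dots> = t (Suc m)"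
        using \<open>m < n\<close> closed by (cases "Suc m = n") simp_all
      finally show ?thesis .
    qed
    ultimately show ?thesis using walk[of m] by (simp add: T_def m_def)
  qed
  then show ?thesis by (auto simp: strongly_contextual_def)
qed

locale nondisturbing_behavior =
  fixes n :: nat and p :: "nat \<Rightarrow> bool \<Rightarrow> bool \<Rightarrow> real"
  assumes behavior: "is_behavior n p"
    and nondisturbing: "nondisturbing n p"
begin

lemma p_nonneg: "i < n \<Longrightarrow> 0 \<le> p i x y"
  using behavior by (simp add: is_behavior_def)

lemma ex_pos: "i < n \<Longrightarrow> \<exists>x y. 0 < p i x y"
  using behavior p_nonneg
  by (simp add: is_behavior_def sum_pos_iff_ex_pos[symmetric] sum_nonneg)

lemma ex_pos_column_iff_ex_pos_row:
  assumes "i < n"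
  shows "(\<exists>x. 0 < p i x y) \<longleftrightarrow> (\<exists>z. 0 < p ((i + 1) mod n) y z)"
proof -
  have "(i + 1) mod n < n" using assms by simp
  then have "(\<exists>x. 0 < p i x y) \<longleftrightarrow> 0 < (\<Sum>x\<in>UNIV. p i x y)"
    and "(\<exists>z. 0 < p ((i + 1) mod n) y z) \<longleftrightarrow> 0 < (\<Sum>z\<in>UNIV. p ((i + 1) mod n) y z)"
    using assms by (simp_all add: sum_pos_iff_ex_pos p_nonneg)
  moreover have "(\<Sum>x\<in>UNIV. p i x y) = (\<Sum>z\<in>UNIV. p ((i + 1) mod n) y z)"
    using nondisturbing assms by (simp add: nondisturbing_def)
  ultimately show ?thesis by simp
qed

lemma walk_exists:
  assumes "j < n" and "0 < p j x y"
  shows "\<exists>t. t 0 = x \<and> (\<forall>m. 0 < p ((j + m) mod n) (t m) (t (Suc m)))"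
proof -
  let ?P = "\<lambda>m z. (m = 0 \<longrightarrow> z = x) \<and> (\<exists>y. 0 < p ((j + m) mod n) z y)"
  have "\<exists>t. \<forall>m. ?P m (t m) \<and> 0 < p ((j + m) mod n) (t m) (t (Suc m))"
  proof (rule dependent_nat_choice)
    show "\<exists>z. ?P 0 z" using assms by auto
  next
    fix z m assume "?P m z"
    then obtain y where y: "0 < p ((j + m) mod n) z y" by blast
    have "((j + m) mod n + 1) mod n = (j + Suc m) mod n" by (simp add: mod_Suc_eq)
    then have "?P (Suc m) y"
      using ex_pos_column_iff_ex_pos_row[of "(j + m) mod n" y] y \<open>j < n\<close> by auto
    with y show "\<exists>y. ?P (Suc m) y \<and> 0 < p ((j + m) mod n) z y" by blast
  qed
  then show ?thesis by blast
qed

text \<open>A greedy walk from \<open>x\<close> reaches position \<open>k\<close> after \<open>n - 1\<close> steps, and the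
  closing condition lets its last step be redirected back to \<open>x\<close>.\<close>

lemma not_strongly_contextual_if_closing:
  assumes "k < n" and "0 < p ((k + 1) mod n) x y"
    and closing: "\<And>z y. 0 < p k z y \<Longrightarrow> 0 < p k z x"
  shows "\<not> strongly_contextual n p"
proof -
  let ?j = "(k + 1) mod n"
  have "?j < n" using \<open>k < n\<close> by simp
  with assms(2) obtain t where "t 0 = x"
    and walk: "\<And>m. 0 < p ((?j + m) mod n) (t m) (t (Suc m))"
    using walk_exists by blast
  have last: "(?j + (n - 1)) mod n = k"
    using \<open>k < n\<close> by (cases "Suc k = n") simp_all
  show ?thesis
  proof (rule not_strongly_contextual_if_closed_walk[of ?j n p "t(n := x)"])
    fix m assume "m < n"
    show "0 < p ((?j + m) mod n) ((t(n := x)) m) ((t(n := x)) (Suc m))"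
    proof (cases "Suc m = n")
      case True
      then show ?thesis using walk[of m] closing last \<open>m < n\<close> by auto
    qed (use walk \<open>m < n\<close> in auto)
  qed (use \<open>?j < n\<close> \<open>t 0 = x\<close> in auto)
qed

end

locale strongly_contextual_behavior = nondisturbing_behavior +
  assumes strongly_contextual: "strongly_contextual n p"
begin

lemma ex_pos_row:
  assumes "i < n"
  shows "\<exists>y. 0 < p i x y"
proof (rule ccontr)
  assume row_empty: "\<nexists>y. 0 < p i x y"
  obtain x' y where "0 < p i x' y" using ex_pos[OF assms] by blast
  with row_empty have y: "0 < p i (\<not> x) y" by (cases x; cases x') auto
  define k where "k = (if i = 0 then n - 1 else i - 1)"
  have "k < n" and i: "(k + 1) mod n = i"
    using assms by (auto simp: k_def)
  have "0 < p k z (\<not> x)" if "0 < p k z y'" for z y'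
  proof -
    have "\<exists>w. 0 < p i y' w"
      using ex_pos_column_iff_ex_pos_row[OF \<open>k < n\<close>] that i by blast
    with row_empty have "y' = (\<not> x)" by (cases "y' = x") auto
    with that show ?thesis by simp
  qed
  with not_strongly_contextual_if_closing[OF \<open>k < n\<close>] y i strongly_contextual
  show False by blast
qed

lemma ex_pos_column:
  assumes "i < n"
  shows "\<exists>x. 0 < p i x y"
  using ex_pos_column_iff_ex_pos_row[OF assms] ex_pos_row[of "(i + 1) mod n"] assms by simp

lemma column_unique:
  assumes "i < n" and "0 < p i x y"
  shows "\<not> 0 < p i (\<not> x) y"
proof
  assume "0 < p i (\<not> x) y"
  with assms(2) have full: "0 < p i z y" for z by (cases "z = x") auto
  obtain w where "0 < p ((i + 1) mod n) y w"
    using ex_pos_column_iff_ex_pos_row[OF \<open>i < n\<close>] assms(2) by blast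
  with not_strongly_contextual_if_closing[OF \<open>i < n\<close>] full strongly_contextual
  show False by blast
qed

lemma row_unique:
  assumes "i < n" and "0 < p i x y"
  shows "\<not> 0 < p i x (\<not> y)"
proof
  assume "0 < p i x (\<not> y)"
  obtain w where "0 < p i (\<not> x) w" using ex_pos_row[OF \<open>i < n\<close>] by blast
  then show False
    using column_unique[OF \<open>i < n\<close> assms(2)] column_unique[OF \<open>i < n\<close> \<open>0 < p i x (\<not> y)\<close>]
    by (cases "w = y") auto
qed

lemma row_exactly_one:
  assumes "i < n"
  shows "0 < p i x (\<not> y) \<longleftrightarrow> \<not> 0 < p i x y"
proof -
  obtain w where "0 < p i x w" using ex_pos_row[OF assms] by blast
  then show ?thesis using row_unique[OF assms, of x] by (cases "w = y") auto
qed

lemma column_exactly_one: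
  assumes "i < n"
  shows "0 < p i (\<not> x) y \<longleftrightarrow> \<not> 0 < p i x y"
proof -
  obtain w where "0 < p i w y" using ex_pos_column[OF assms] by blast
  then show ?thesis using column_unique[OF assms] by (cases "w = x") auto
qed

lemma support_eq_correlation:
  assumes "i < n"
  shows "0 < p i x y \<longleftrightarrow> ((x \<longleftrightarrow> y) \<longleftrightarrow> 0 < p i True True)"
  using row_exactly_one[OF assms, of True True] column_exactly_one[OF assms, of True True]
    column_exactly_one[OF assms, of True False]
  by (cases x; cases y) auto

end

theorem theorem5:
  fixes n :: nat and p :: "nat \<Rightarrow> bool \<Rightarrow> bool \<Rightarrow> real"
  assumes "n \<ge> 3"
    and "is_behavior n p"
    and "nondisturbing n p"
    and "strongly_contextual n p"
  shows "\<exists>k<n. \<exists>a :: nat \<Rightarrow> bool.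
     pbar p k (a k) (\<not> a ((k + 1) mod n)) = 1 \<and>
     pbar p k (\<not> a k) (a ((k + 1) mod n)) = 1 \<and>
     pbar p k (a k) (a ((k + 1) mod n)) = 0 \<and>
     pbar p k (\<not> a k) (\<not> a ((k + 1) mod n)) = 0 \<and>
     (\<forall>i<n. i \<noteq> k \<longrightarrow>
        pbar p i (a i) (a ((i + 1) mod n)) = 1 \<and>
        pbar p i (\<not> a i) (\<not> a ((i + 1) mod n)) = 1 \<and>
        pbar p i (a i) (\<not> a ((i + 1) mod n)) = 0 \<and>
        pbar p i (\<not> a i) (a ((i + 1) mod n)) = 0)"
proof -
  interpret strongly_contextual_behavior n p
    using assms(2-4) by unfold_locales
  define c where "c i \<longleftrightarrow> 0 < p i True True" for i
  have support: "0 < p i x y \<longleftrightarrow> ((x \<longleftrightarrow> y) \<longleftrightarrow> c i)" if "i < n" for i x y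
    unfolding c_def by (rule support_eq_correlation[OF that])
  define a where "a = rec_nat False (\<lambda>m b. b \<longleftrightarrow> c m)"
  have a_Suc: "(a m \<longleftrightarrow> a (Suc m)) \<longleftrightarrow> c m" for m
    by (cases "c m") (simp_all add: a_def)
  define k where "k = n - 1"
  have k: "k < n" "(k + 1) mod n = 0" and next_idx: "\<And>i. i < n \<Longrightarrow> i \<noteq> k \<Longrightarrow> (i + 1) mod n = Suc i"
    using assms(1) by (auto simp: k_def)
  have defect: "\<not> ((a k \<longleftrightarrow> a 0) \<longleftrightarrow> c k)"
  proof
    assume "(a k \<longleftrightarrow> a 0) \<longleftrightarrow> c k"
    then have "0 < p i (a i) (a ((i + 1) mod n))" if "i < n" for i
      using that support[OF that] a_Suc[of i] next_idx[OF that] k by (cases "i = k") auto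
    with strongly_contextual show False by (auto simp: strongly_contextual_def)
  qed
  have correlated: "0 < p i x y \<longleftrightarrow> ((x \<longleftrightarrow> y) \<longleftrightarrow> (a i \<longleftrightarrow> a ((i + 1) mod n)))"
    if "i < n" "i \<noteq> k" for i x y
    using support[OF that(1)] a_Suc[of i] next_idx[OF that] by simp
  have anticorrelated: "0 < p k x y \<longleftrightarrow> \<not> ((x \<longleftrightarrow> y) \<longleftrightarrow> (a k \<longleftrightarrow> a ((k + 1) mod n)))" for x y
    using support[OF k(1)] defect k(2) by auto
  show ?thesis
    by (intro exI[of _ k] conjI[OF k(1)] exI[of _ a]) (auto simp: pbar_def correlated anticorrelated)
qed

end
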